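(* Let $M$ be an $n\times n$ complex matrix, $k\in\{3,\dots,n-1\}$ and $p$ a positive integer with $p\leq k$. If $M$ is $k$-spectrally monomorphic, then for every subset $\beta\subseteq[n]$ with $|\beta|\leq n-k$, the number \[ \sum_{\alpha\supseteq\beta,\ |\alpha|=p}\det(M[\alpha]) \] (sum over subsets $\alpha\subseteq[n]$ of size $p$ containing $\beta$) depends only on the cardinality of $\beta$.
   Context: $[n]=\{1,\dots,n\}$. For $\alpha\subseteq[n]$, $M[\alpha]$ is the principal submatrix of $M$ with rows and columns indexed by $\alpha$. A square matrix is $k$-spectrally monomorphic if all its $k\times k$ principal submatrices have the same characteristic polynomial $\det(zI-M[\alpha])$. *)

theory Defs
  imports Jordan_Normal_Form.Char_Poly Jordan_Normal_Form.DL_Submatrix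
begin

text \<open>Principal submatrix M[alpha]; indices are 0-based, so [n] is rendered as {0..<n}.\<close>
definition principal_submatrix :: "'a mat \<Rightarrow> nat set \<Rightarrow> 'a mat" where
  "principal_submatrix M \<alpha> = submatrix M \<alpha> \<alpha>"

definition spectrally_monomorphic :: "nat \<Rightarrow> 'a :: comm_ring_1 mat \<Rightarrow> bool" where
  "spectrally_monomorphic k M \<longleftrightarrow>
     (\<forall>\<alpha> \<gamma>. \<alpha> \<subseteq> {0..<dim_row M} \<and> card \<alpha> = k \<and> \<gamma> \<subseteq> {0..<dim_row M} \<and> card \<gamma> = k
        \<longrightarrow> char_poly (principal_submatrix M \<alpha>) = char_poly (principal_submatrix M \<gamma>))"

end

theory Submission
  imports Defs
begin

text \<open>Differentiating the characteristic polynomial of a principal submatrix \<open>M[T]\<close> deletes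
  one index at a time, so its \<open>(|T| - j)\<close>-th derivative is \<open>(|T| - j)!\<close> times the sum of the
  characteristic polynomials of the \<open>j \<times> j\<close> principal submatrices of \<open>M[T]\<close>; at \<open>z = 0\<close> this
  is, up to sign, the sum of the \<open>j \<times> j\<close> principal minors of \<open>M[T]\<close>. If all \<open>k \<times> k\<close> principal
  submatrices share one characteristic polynomial, differentiating first \<open>|T| - k\<close> times shows
  that the sum of the \<open>p \<times> p\<close> principal minors inside any \<open>T\<close> with \<open>|T| \<ge> k\<close> depends only
  on \<open>|T|\<close>. Inclusion-exclusion over the subsets \<open>\<delta>\<close> of \<open>\<beta>\<close> writes the sum over the \<open>p\<close>-sets
  containing \<open>\<beta>\<close> as an alternating sum of such sums over the complements \<open>[n] - \<delta>\<close>, which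
  have at least \<open>k\<close> elements because \<open>|\<beta>| \<le> n - k\<close>.\<close>

lemma sum_Pow_card:
  fixes \<phi> :: "nat \<Rightarrow> 'a::comm_ring_1"
  assumes "finite X"
  shows "(\<Sum>\<delta>\<in>Pow X. \<phi> (card \<delta>)) = (\<Sum>d\<le>card X. of_nat (card X choose d) * \<phi> d)"
proof -
  have "(\<Sum>\<delta>\<in>Pow X. \<phi> (card \<delta>)) = (\<Sum>d\<le>card X. \<Sum>\<delta>\<in>{\<delta>\<in>Pow X. card \<delta> = d}. \<phi> (card \<delta>))"
    by (rule sum.group[symmetric]) (use assms card_mono in auto)
  also have "\<dots> = (\<Sum>d\<le>card X. of_nat (card X choose d) * \<phi> d)"
  proof (rule sum.cong[OF refl])
    fix d
    have "{\<delta>\<in>Pow X. card \<delta> = d} = {B. B \<subseteq> X \<and> card B = d}" by auto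
    then show "(\<Sum>\<delta>\<in>{\<delta>\<in>Pow X. card \<delta> = d}. \<phi> (card \<delta>)) = of_nat (card X choose d) * \<phi> d"
      using n_subsets[OF assms] by simp
  qed
  finally show ?thesis .
qed

lemma sum_Pow_alternating:
  assumes "finite X"
  shows "(\<Sum>\<delta>\<in>Pow X. (-1::'a::comm_ring_1) ^ card \<delta>) = (if X = {} then 1 else 0)"
proof (cases "X = {}")
  case False
  then have "card X > 0" using assms by auto
  then show ?thesis using False sum_Pow_card[OF assms, of "\<lambda>d. (-1::'a) ^ d"]
    choose_alternating_sum[of "card X"] by (simp add: mult.commute)
qed simp

lemma sum_supersets_inclusion_exclusion:
  fixes w :: "'a set \<Rightarrow> 'b::comm_ring_1"
  assumes A: "finite A" and \<beta>: "finite \<beta>"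
  shows "(\<Sum>\<alpha>\<in>{\<alpha>\<in>A. \<beta> \<subseteq> \<alpha>}. w \<alpha>) = (\<Sum>\<delta>\<in>Pow \<beta>. (-1) ^ card \<delta> * (\<Sum>\<alpha>\<in>{\<alpha>\<in>A. \<alpha> \<inter> \<delta> = {}}. w \<alpha>))"
proof -
  have "(\<Sum>\<alpha>\<in>{\<alpha>\<in>A. \<beta> \<subseteq> \<alpha>}. w \<alpha>) = (\<Sum>\<alpha>\<in>A. w \<alpha> * (\<Sum>\<delta>\<in>Pow (\<beta> - \<alpha>). (-1) ^ card \<delta>))"
    by (simp add: sum_Pow_alternating \<beta> sum.inter_filter[OF A] if_distrib cong: if_cong)
  also have "\<dots> = (\<Sum>\<alpha>\<in>A. \<Sum>\<delta>\<in>Pow \<beta>. if \<alpha> \<inter> \<delta> = {} then (-1) ^ card \<delta> * w \<alpha> else 0)"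
  proof (rule sum.cong[OF refl])
    fix \<alpha>
    have Pow_Diff: "Pow (\<beta> - \<alpha>) = {\<delta>\<in>Pow \<beta>. \<alpha> \<inter> \<delta> = {}}" by blast
    show "w \<alpha> * (\<Sum>\<delta>\<in>Pow (\<beta> - \<alpha>). (-1) ^ card \<delta>) =
        (\<Sum>\<delta>\<in>Pow \<beta>. if \<alpha> \<inter> \<delta> = {} then (-1) ^ card \<delta> * w \<alpha> else 0)"
      unfolding Pow_Diff sum_distrib_left sum.inter_filter[OF finite_Pow_iff[THEN iffD2, OF \<beta>]]
      by (rule sum.cong) (auto simp: mult.commute)
  qed
  also have "\<dots> = (\<Sum>\<delta>\<in>Pow \<beta>. (-1) ^ card \<delta> * (\<Sum>\<alpha>\<in>{\<alpha>\<in>A. \<alpha> \<inter> \<delta> = {}}. w \<alpha>))"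
    by (subst sum.swap) (auto simp: sum_distrib_left sum.inter_filter[OF A] intro!: sum.cong)
  finally show ?thesis .
qed

lemma sum_supersets_card_eq:
  fixes w :: "'a set \<Rightarrow> 'b::comm_ring_1"
  assumes U: "finite U" and \<beta>: "\<beta> \<subseteq> U"
    and avoiding: "\<And>\<delta>. \<delta> \<subseteq> \<beta> \<Longrightarrow> (\<Sum>\<alpha>\<in>{\<alpha>. \<alpha> \<subseteq> U - \<delta> \<and> card \<alpha> = p}. w \<alpha>) = H (card U - card \<delta>)"
  shows "(\<Sum>\<alpha>\<in>{\<alpha>. \<alpha> \<subseteq> U \<and> \<beta> \<subseteq> \<alpha> \<and> card \<alpha> = p}. w \<alpha>)
    = (\<Sum>d\<le>card \<beta>. of_nat (card \<beta> choose d) * ((-1) ^ d * H (card U - d)))"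
proof -
  let ?A = "{\<alpha>. \<alpha> \<subseteq> U \<and> card \<alpha> = p}"
  have fin: "finite ?A" "finite \<beta>" using U \<beta> by (auto intro: finite_subset[of _ "Pow U"] finite_subset)
  have "{\<alpha>. \<alpha> \<subseteq> U \<and> \<beta> \<subseteq> \<alpha> \<and> card \<alpha> = p} = {\<alpha>\<in>?A. \<beta> \<subseteq> \<alpha>}" by blast
  then have "(\<Sum>\<alpha>\<in>{\<alpha>. \<alpha> \<subseteq> U \<and> \<beta> \<subseteq> \<alpha> \<and> card \<alpha> = p}. w \<alpha>)
      = (\<Sum>\<delta>\<in>Pow \<beta>. (-1) ^ card \<delta> * (\<Sum>\<alpha>\<in>{\<alpha>\<in>?A. \<alpha> \<inter> \<delta> = {}}. w \<alpha>))"
    using sum_supersets_inclusion_exclusion[OF fin] by simp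
  also have "\<dots> = (\<Sum>\<delta>\<in>Pow \<beta>. (-1) ^ card \<delta> * H (card U - card \<delta>))"
  proof (intro sum.cong refl arg_cong[where f = "(*) _"])
    fix \<delta> assume "\<delta> \<in> Pow \<beta>"
    moreover have "{\<alpha>\<in>?A. \<alpha> \<inter> \<delta> = {}} = {\<alpha>. \<alpha> \<subseteq> U - \<delta> \<and> card \<alpha> = p}" by blast
    ultimately show "(\<Sum>\<alpha>\<in>{\<alpha>\<in>?A. \<alpha> \<inter> \<delta> = {}}. w \<alpha>) = H (card U - card \<delta>)"
      using avoiding by simp
  qed
  also have "\<dots> = (\<Sum>d\<le>card \<beta>. of_nat (card \<beta> choose d) * ((-1) ^ d * H (card U - d)))"
    by (rule sum_Pow_card[OF fin(2)])
  finally show ?thesis .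
qed

lemma sum_subsets_card_Suc_remove:
  fixes f :: "'a set \<Rightarrow> 'b::comm_semiring_1"
  assumes G: "finite G"
  shows "(\<Sum>\<alpha>\<in>{\<alpha>. \<alpha> \<subseteq> G \<and> card \<alpha> = Suc s}. \<Sum>x\<in>\<alpha>. f (\<alpha> - {x}))
       = of_nat (card G - s) * (\<Sum>\<beta>\<in>{\<beta>. \<beta> \<subseteq> G \<and> card \<beta> = s}. f \<beta>)"
proof -
  let ?A = "{\<alpha>. \<alpha> \<subseteq> G \<and> card \<alpha> = Suc s}"
  let ?B = "{\<beta>. \<beta> \<subseteq> G \<and> card \<beta> = s}"
  have fin: "finite ?A" "finite ?B" using G by (auto intro: finite_subset[of _ "Pow G"])
  have "(\<Sum>\<alpha>\<in>?A. \<Sum>x\<in>\<alpha>. f (\<alpha> - {x})) = (\<Sum>(\<alpha>,x)\<in>Sigma ?A (\<lambda>\<alpha>. \<alpha>). f (\<alpha> - {x}))"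
    by (rule sum.Sigma) (use fin G finite_subset in auto)
  also have "\<dots> = (\<Sum>(\<beta>,x)\<in>Sigma ?B (\<lambda>\<beta>. G - \<beta>). f \<beta>)"
    by (rule sum.reindex_bij_witness[where i = "\<lambda>(\<beta>,x). (insert x \<beta>, x)" and j = "\<lambda>(\<alpha>,x). (\<alpha> - {x}, x)"])
      (auto simp: card_insert_if finite_subset[OF _ G])
  also have "\<dots> = (\<Sum>\<beta>\<in>?B. \<Sum>x\<in>G - \<beta>. f \<beta>)"
    by (rule sum.Sigma[symmetric]) (use fin G in auto)
  also have "\<dots> = (\<Sum>\<beta>\<in>?B. of_nat (card G - s) * f \<beta>)"
    by (rule sum.cong) (auto simp: card_Diff_subset finite_subset[OF _ G])
  finally show ?thesis by (simp add: sum_distrib_left)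
qed

lemma fact_choose_chain:
  assumes "p \<le> k" "k \<le> m"
  shows "fact (m - k) * (m choose k) * fact (k - p) * (k choose p) = (m choose p) * (fact (m - p) :: nat)"
proof -
  have "fact (m - k) * (m choose k) * fact (k - p) * (k choose p) * fact p * fact k
      = ((m choose k) * fact k * fact (m - k)) * ((k choose p) * fact p * fact (k - p))"
    by (simp add: ac_simps)
  also have "\<dots> = fact m * fact k"
    using binomial_fact_lemma[of k m] binomial_fact_lemma[of p k] assms by (simp add: ac_simps)
  also have "\<dots> = (m choose p) * fact (m - p) * fact p * fact k"
    using assms binomial_fact_lemma[of p m] by (simp add: ac_simps)
  finally show ?thesis by simp
qed

lemma pick_Diff_pick:
  assumes "finite S" "i < card S" "j < card S - 1"
  shows "pick (S - {pick S i}) j = pick S (if j < i then j else Suc j)"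
proof -
  define j' where "j' = (if j < i then j else Suc j)"
  have j': "j' < card S" using assms unfolding j'_def by auto
  have ne: "pick S j' \<noteq> pick S i"
    using pick_mono[of i S j'] pick_mono[of j' S i] assms j' unfolding j'_def
    by (cases "j < i") auto
  have "{a \<in> S - {pick S i}. a < pick S j'} = {a \<in> S. a < pick S j'} - {pick S i}"
    by auto
  moreover have "card ({a \<in> S. a < pick S j'} - {pick S i}) = j"
  proof (cases "j < i")
    case True
    then have "pick S j' < pick S i" using pick_mono[of i S j'] assms unfolding j'_def by auto
    then show ?thesis using card_pick[of j' S] j' True unfolding j'_def by auto
  next
    case False
    then have "pick S i < pick S j'" using pick_mono[of j' S i] j' unfolding j'_def by auto
    then show ?thesis using card_pick[of j' S] j' False pick_in_set[of i S] assms(1,2)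
      unfolding j'_def by auto
  qed
  ultimately have "card {a \<in> S - {pick S i}. a < pick S j'} = j" by simp
  then show ?thesis
    using pick_card_in_set[of "pick S j'" "S - {pick S i}"] pick_in_set[of j' S] j' ne
    unfolding j'_def by auto
qed

lemma bij_betw_pick:
  assumes "finite S"
  shows "bij_betw (pick S) {..<card S} S"
proof -
  have inj: "inj_on (pick S) {..<card S}"
    unfolding inj_on_def by (metis lessThan_iff nat_neq_iff pick_mono less_irrefl)
  have "pick S ` {..<card S} \<subseteq> S" using pick_in_set by auto
  moreover have "card (pick S ` {..<card S}) = card S" using card_image[OF inj] by simp
  ultimately have "pick S ` {..<card S} = S" using card_subset_eq[OF assms] by simp
  then show ?thesis using inj unfolding bij_betw_def by simp
qed

lemma principal_submatrix_carrier:
  assumes "M \<in> carrier_mat n n" "\<gamma> \<subseteq> {0..<n}"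
  shows "principal_submatrix M \<gamma> \<in> carrier_mat (card \<gamma>) (card \<gamma>)"
proof -
  have "{j. j < n \<and> j \<in> \<gamma>} = \<gamma>" using assms(2) by auto
  then show ?thesis
    using assms(1) unfolding principal_submatrix_def carrier_mat_def by (auto simp: dim_submatrix)
qed

lemma principal_submatrix_index:
  assumes "M \<in> carrier_mat n n" "\<gamma> \<subseteq> {0..<n}" "i < card \<gamma>" "j < card \<gamma>"
  shows "principal_submatrix M \<gamma> $$ (i, j) = M $$ (pick \<gamma> i, pick \<gamma> j)"
proof -
  have "{j. j < n \<and> j \<in> \<gamma>} = \<gamma>" using assms(2) by auto
  then show ?thesis
    unfolding principal_submatrix_def using assms by (intro submatrix_index) auto
qed

lemma mat_delete_principal_submatrix:
  assumes M: "M \<in> carrier_mat n n" and \<gamma>: "\<gamma> \<subseteq> {0..<n}" and i: "i < card \<gamma>"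
  shows "mat_delete (principal_submatrix M \<gamma>) i i = principal_submatrix M (\<gamma> - {pick \<gamma> i})"
proof -
  have fin: "finite \<gamma>" using \<gamma> finite_subset by blast
  have \<gamma>': "\<gamma> - {pick \<gamma> i} \<subseteq> {0..<n}" using \<gamma> by auto
  have card': "card (\<gamma> - {pick \<gamma> i}) = card \<gamma> - 1"
    using pick_in_set[of i \<gamma>] i fin by simp
  note carriers = principal_submatrix_carrier[OF M \<gamma>] principal_submatrix_carrier[OF M \<gamma>']
  show ?thesis
  proof (rule eq_matI)
    fix a b
    assume "a < dim_row (principal_submatrix M (\<gamma> - {pick \<gamma> i}))"
      and "b < dim_col (principal_submatrix M (\<gamma> - {pick \<gamma> i}))"
    then have ab: "a < card \<gamma> - 1" "b < card \<gamma> - 1" using carriers card' by auto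
    then show "mat_delete (principal_submatrix M \<gamma>) i i $$ (a, b)
        = principal_submatrix M (\<gamma> - {pick \<gamma> i}) $$ (a, b)"
      using carriers card'
      by (auto simp: mat_delete_def principal_submatrix_index[OF M \<gamma>] principal_submatrix_index[OF M \<gamma>']
          pick_Diff_pick[OF fin i])
  qed (use carriers card' in auto)
qed

lemma pderiv_char_poly_principal_submatrix:
  fixes M :: "'a :: idom mat"
  assumes M: "M \<in> carrier_mat n n" and \<gamma>: "\<gamma> \<subseteq> {0..<n}"
  shows "pderiv (char_poly (principal_submatrix M \<gamma>))
    = (\<Sum>x\<in>\<gamma>. char_poly (principal_submatrix M (\<gamma> - {x})))"
proof -
  have "pderiv (char_poly (principal_submatrix M \<gamma>))
      = (\<Sum>i<card \<gamma>. char_poly (principal_submatrix M (\<gamma> - {pick \<gamma> i})))"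
    by (simp add: pderiv_char_poly[OF principal_submatrix_carrier[OF M \<gamma>]]
        mat_delete_principal_submatrix[OF M \<gamma>])
  also have "\<dots> = (\<Sum>x\<in>\<gamma>. char_poly (principal_submatrix M (\<gamma> - {x})))"
    using \<gamma> finite_subset by (intro sum.reindex_bij_betw bij_betw_pick) auto
  finally show ?thesis .
qed

lemma higher_pderiv_char_poly_principal_submatrix:
  fixes M :: "'a :: idom mat"
  assumes M: "M \<in> carrier_mat n n" and \<gamma>: "\<gamma> \<subseteq> {0..<n}" and j: "j \<le> card \<gamma>"
  shows "(pderiv ^^ j) (char_poly (principal_submatrix M \<gamma>)) = Polynomial.smult (of_nat (fact j))
    (\<Sum>\<alpha>\<in>{\<alpha>. \<alpha> \<subseteq> \<gamma> \<and> card \<alpha> = card \<gamma> - j}. char_poly (principal_submatrix M \<alpha>))"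
  using j
proof (induction j)
  case 0
  have "{\<alpha>. \<alpha> \<subseteq> \<gamma> \<and> card \<alpha> = card \<gamma>} = {\<gamma>}"
    using \<gamma> finite_subset by (auto dest: card_subset_eq)
  then show ?case by simp
next
  case (Suc j)
  define s where "s = card \<gamma> - Suc j"
  have s: "card \<gamma> - j = Suc s" "card \<gamma> - s = Suc j" using Suc.prems unfolding s_def by auto
  have "(pderiv ^^ Suc j) (char_poly (principal_submatrix M \<gamma>)) = Polynomial.smult (of_nat (fact j))
      (\<Sum>\<alpha>\<in>{\<alpha>. \<alpha> \<subseteq> \<gamma> \<and> card \<alpha> = Suc s}. \<Sum>x\<in>\<alpha>. char_poly (principal_submatrix M (\<alpha> - {x})))"
    unfolding funpow.simps o_apply Suc.IH[OF Suc_leD[OF Suc.prems]] s pderiv_smult pderiv_sum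
    by (intro arg_cong[where f = "Polynomial.smult _"] sum.cong refl pderiv_char_poly_principal_submatrix[OF M])
      (use \<gamma> in auto)
  also have "\<dots> = Polynomial.smult (of_nat (fact j)) (of_nat (Suc j) *
      (\<Sum>\<beta>\<in>{\<beta>. \<beta> \<subseteq> \<gamma> \<and> card \<beta> = s}. char_poly (principal_submatrix M \<beta>)))"
    using sum_subsets_card_Suc_remove[OF finite_subset[OF \<gamma>],
        where f = "\<lambda>\<beta>. char_poly (principal_submatrix M \<beta>)"] s by simp
  also have "\<dots> = Polynomial.smult (of_nat (fact (Suc j)))
      (\<Sum>\<beta>\<in>{\<beta>. \<beta> \<subseteq> \<gamma> \<and> card \<beta> = s}. char_poly (principal_submatrix M \<beta>))"
    by (simp add: of_nat_poly smult_smult algebra_simps)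
  finally show ?case unfolding s_def .
qed

lemma poly_char_poly_0:
  fixes A :: "'a :: comm_ring_1 mat"
  assumes A: "A \<in> carrier_mat m m"
  shows "poly (char_poly A) 0 = (-1) ^ m * det A"
proof -
  have "poly (char_poly A) 0 = det ((-1) \<cdot>\<^sub>m A)"
    unfolding char_poly_def
    by (rule poly_det_cong[of _ m]) (use A in \<open>auto simp: char_poly_matrix_def\<close>)
  then show ?thesis using A by simp
qed

definition principal_minor_sum :: "'a :: comm_ring_1 mat \<Rightarrow> nat \<Rightarrow> nat set \<Rightarrow> 'a" where
  "principal_minor_sum M p T = (\<Sum>\<alpha>\<in>{\<alpha>. \<alpha> \<subseteq> T \<and> card \<alpha> = p}. det (principal_submatrix M \<alpha>))"

lemma poly_higher_pderiv_char_poly_principal_submatrix: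
  fixes M :: "'a :: idom mat"
  assumes M: "M \<in> carrier_mat n n" and T: "T \<subseteq> {0..<n}" and p: "p \<le> card T"
  shows "poly ((pderiv ^^ (card T - p)) (char_poly (principal_submatrix M T))) 0
    = of_nat (fact (card T - p)) * (-1) ^ p * principal_minor_sum M p T"
proof -
  have "poly (char_poly (principal_submatrix M \<alpha>)) 0 = (-1) ^ p * det (principal_submatrix M \<alpha>)"
    if "\<alpha> \<in> {\<alpha>. \<alpha> \<subseteq> T \<and> card \<alpha> = p}" for \<alpha>
    using that T poly_char_poly_0[OF principal_submatrix_carrier[OF M]] by auto
  then show ?thesis
    using p unfolding higher_pderiv_char_poly_principal_submatrix[OF M T diff_le_self]
    by (simp add: poly_sum principal_minor_sum_def sum_distrib_left mult.assoc)
qed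

lemma spectrally_monomorphic_principal_minor_sum:
  fixes M :: "'a :: field_char_0 mat"
  assumes M: "M \<in> carrier_mat n n" and mono: "spectrally_monomorphic k M" and p: "p \<le> k"
    and \<gamma>: "\<gamma> \<subseteq> {0..<n}" "card \<gamma> = k" and T: "T \<subseteq> {0..<n}" "k \<le> card T"
  shows "principal_minor_sum M p T
    = of_nat (card T choose p) / of_nat (k choose p) * principal_minor_sum M p \<gamma>"
proof -
  define m where "m = card T"
  define q where "q = char_poly (principal_submatrix M \<gamma>)"
  have q: "char_poly (principal_submatrix M \<delta>) = q" if "\<delta> \<subseteq> T" "card \<delta> = k" for \<delta>
  proof -
    have "\<delta> \<subseteq> {0..<dim_row M}" "\<gamma> \<subseteq> {0..<dim_row M}" using that T \<gamma> M by auto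
    then show ?thesis using mono that(2) \<gamma>(2) unfolding spectrally_monomorphic_def q_def by blast
  qed
  have "(pderiv ^^ (m - k)) (char_poly (principal_submatrix M T))
      = Polynomial.smult (of_nat (fact (m - k)))
          (\<Sum>\<delta>\<in>{\<delta>. \<delta> \<subseteq> T \<and> card \<delta> = k}. char_poly (principal_submatrix M \<delta>))"
    using higher_pderiv_char_poly_principal_submatrix[OF M T(1), of "m - k"] T
    unfolding m_def by simp
  also have "\<dots> = Polynomial.smult (of_nat (fact (m - k) * (m choose k))) q"
    using n_subsets[OF finite_subset[OF T(1)], of k] q
    unfolding m_def by (simp add: of_nat_poly smult_smult)
  finally have "(pderiv ^^ (m - k)) (char_poly (principal_submatrix M T))
      = Polynomial.smult (of_nat (fact (m - k) * (m choose k))) q" .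
  moreover have "m - p = (k - p) + (m - k)" using p T unfolding m_def by simp
  ultimately have "(pderiv ^^ (m - p)) (char_poly (principal_submatrix M T))
      = Polynomial.smult (of_nat (fact (m - k) * (m choose k))) ((pderiv ^^ (k - p)) q)"
    by (simp add: funpow_add higher_pderiv_smult)
  from arg_cong[OF this, of "\<lambda>f. poly f 0"]
  have "of_nat (fact (m - p)) * (-1) ^ p * principal_minor_sum M p T
      = of_nat (fact (m - k) * (m choose k)) * (of_nat (fact (k - p)) * (-1) ^ p * principal_minor_sum M p \<gamma>)"
    using poly_higher_pderiv_char_poly_principal_submatrix[OF M T(1)]
      poly_higher_pderiv_char_poly_principal_submatrix[OF M \<gamma>(1)] p T \<gamma>(2)
    unfolding m_def q_def by simp
  then have "of_nat (fact (m - p)) * principal_minor_sum M p T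
      = of_nat (fact (m - k) * (m choose k) * fact (k - p)) * principal_minor_sum M p \<gamma>"
    by (simp add: algebra_simps)
  then have "of_nat (k choose p) * (of_nat (fact (m - p)) * principal_minor_sum M p T)
      = of_nat (fact (m - k) * (m choose k) * fact (k - p) * (k choose p)) * principal_minor_sum M p \<gamma>"
    by (simp only: of_nat_mult ac_simps)
  also have "\<dots> = of_nat (fact (m - p)) * (of_nat (m choose p) * principal_minor_sum M p \<gamma>)"
    unfolding fact_choose_chain[OF p T(2)[folded m_def]] by (simp only: of_nat_mult ac_simps)
  finally have "of_nat (fact (m - p)) * (of_nat (k choose p) * principal_minor_sum M p T)
      = of_nat (fact (m - p)) * (of_nat (m choose p) * principal_minor_sum M p \<gamma>)"
    by (simp only: ac_simps)
  then show ?thesis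
    using p unfolding m_def by (simp add: field_simps)
qed

theorem proposition2p3:
  fixes M :: "complex mat" and n k p :: nat
  assumes "M \<in> carrier_mat n n"
    and "3 \<le> k" and "k \<le> n - 1"
    and "0 < p" and "p \<le> k"
    and "spectrally_monomorphic k M"
  shows "\<exists>f :: nat \<Rightarrow> complex. \<forall>\<beta>. \<beta> \<subseteq> {0..<n} \<and> card \<beta> \<le> n - k \<longrightarrow>
           (\<Sum>\<alpha> \<in> {\<alpha>. \<alpha> \<subseteq> {0..<n} \<and> \<beta> \<subseteq> \<alpha> \<and> card \<alpha> = p}.
               det (principal_submatrix M \<alpha>)) = f (card \<beta>)"
proof -
  have "k \<le> n" using assms(2,3) by linarith
  define H where "H m = of_nat (m choose p) / of_nat (k choose p) * principal_minor_sum M p {0..<k}"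
    for m
  define f where "f b = (\<Sum>d\<le>b. of_nat (b choose d) * ((-1) ^ d * H (n - d)))" for b
  have "(\<Sum>\<alpha>\<in>{\<alpha>. \<alpha> \<subseteq> {0..<n} \<and> \<beta> \<subseteq> \<alpha> \<and> card \<alpha> = p}. det (principal_submatrix M \<alpha>)) = f (card \<beta>)"
    if \<beta>: "\<beta> \<subseteq> {0..<n}" "card \<beta> \<le> n - k" for \<beta>
  proof -
    have avoiding: "(\<Sum>\<alpha>\<in>{\<alpha>. \<alpha> \<subseteq> {0..<n} - \<delta> \<and> card \<alpha> = p}. det (principal_submatrix M \<alpha>))
        = H (card {0..<n} - card \<delta>)" if "\<delta> \<subseteq> \<beta>" for \<delta>
    proof -
      have "card \<delta> \<le> card \<beta>" using that \<beta>(1) card_mono finite_subset by blast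
      then have "card ({0..<n} - \<delta>) = n - card \<delta>" "k \<le> card ({0..<n} - \<delta>)"
        using that \<beta> \<open>k \<le> n\<close> by (auto simp: card_Diff_subset finite_subset)
      then show ?thesis
        using spectrally_monomorphic_principal_minor_sum[OF assms(1,6,5), of "{0..<k}" "{0..<n} - \<delta>"]
          \<open>k \<le> n\<close> unfolding H_def principal_minor_sum_def by auto
    qed
    show ?thesis
      using sum_supersets_card_eq[of "{0..<n}" \<beta>, OF _ \<beta>(1) avoiding] unfolding f_def by simp
  qed
  then show ?thesis by blast
qed

end
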